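(* Let $\mathcal C$ be a $\dagger$-symmetric monoidal category, let $(A,\delta_A,\gamma_A)$ be a $\dagger$-Frobenius structure in $\mathcal C$, and let $U:A\to A$ be unitary. Then $(A,\ (U\otimes U)\circ\delta_A\circ U^\dagger,\ \gamma_A\circ U^\dagger)$ is also a $\dagger$-Frobenius structure. Moreover, the two $\dagger$-compact structures induced by these two $\dagger$-Frobenius structures (namely $\epsilon=\gamma_A\circ\delta_A^\dagger$ and $\epsilon'=\gamma_A\circ U^\dagger\circ\big((U\otimes U)\circ\delta_A\circ U^\dagger\big)^\dagger$, both of type $A\otimes A\to I$) coincide if and only if $U_*=U$, where $U_*$ is computed with respect to the self-dual compact structure $\epsilon$ on $A$ (with $A^*=A$).
   Context: A $\dagger$-symmetric monoidal category ($\dagger$-SMC) is a symmetric monoidal category (associativity and unit isomorphisms taken strict, symmetry $\sigma_{A,B}:A\otimes B\to B\otimes A$) with an involutive, identity-on-objects contravariant functor $\dagger$ satisfying $(g\circ f)^\dagger=f^\dagger\circ g^\dagger$, $f^{\dagger\dagger}=f$, $(f\otimes g)^\dagger=f^\dagger\otimes g^\dagger$, and $\sigma^\dagger=\sigma^{-1}$. A morphism $f$ is unitary if it is invertible with $f^{-1}=f^\dagger$. A $\dagger$-Frobenius structure is a co-commutative comonoid $(A,\delta_A:A\to A\otimes A,\gamma_A:A\to I)$ (coassociative, counital) such that $\delta_A^\dagger\circ\delta_A=1_A$ and $\delta_A\circ\delta_A^\dagger=(\delta_A^\dagger\otimes 1_A)\circ(1_A\otimes\delta_A)$. A $\dagger$-compact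 structure is a pair $(A,\epsilon_A:A\otimes A^*\to I)$ (for some object $A^*$) with $(\epsilon_A\otimes 1_A)\circ(1_A\otimes\sigma_{A,A^*})\circ(1_A\otimes\epsilon_A^\dagger)=1_A$; for a $\dagger$-Frobenius structure, $(A,\gamma_A\circ\delta_A^\dagger)$ is a $\dagger$-compact structure with $A^*=A$. Given such a self-dual compact structure $\epsilon:A\otimes A\to I$, for $f:A\to A$ define $f^*:=(1_A\otimes\epsilon)\circ(1_A\otimes f\otimes 1_A)\circ(\epsilon^\dagger\otimes 1_A):A\to A$ and $f_*:=(f^\dagger)^*$. *)

theory Defs
  imports Main
begin

text \<open>A strict dagger-symmetric monoidal category, presented explicitly by its data:
objects of type 'o, morphisms of type 'm, with domain/codomain, identities, composition
(Comp g f means g after f), tensor on objects and morphisms, unit object, symmetry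
and dagger.  Associativity and unit isomorphisms are strict (identities).\<close>

record ('o, 'm) dsmc =
  Obj  :: "'o set"
  Arr  :: "'m set"
  Dom  :: "'m \<Rightarrow> 'o"
  Cod  :: "'m \<Rightarrow> 'o"
  Id   :: "'o \<Rightarrow> 'm"
  Comp :: "'m \<Rightarrow> 'm \<Rightarrow> 'm"
  TenO :: "'o \<Rightarrow> 'o \<Rightarrow> 'o"
  TenM :: "'m \<Rightarrow> 'm \<Rightarrow> 'm"
  Unit :: "'o"
  Sym  :: "'o \<Rightarrow> 'o \<Rightarrow> 'm"
  Dag  :: "'m \<Rightarrow> 'm"

definition hom :: "('o, 'm) dsmc \<Rightarrow> 'o \<Rightarrow> 'o \<Rightarrow> 'm set" where
  "hom C a b = {f \<in> Arr C. Dom C f = a \<and> Cod C f = b}"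

definition category :: "('o, 'm) dsmc \<Rightarrow> bool" where
  "category C \<longleftrightarrow>
     (\<forall>f \<in> Arr C. Dom C f \<in> Obj C \<and> Cod C f \<in> Obj C) \<and>
     (\<forall>a \<in> Obj C. Id C a \<in> hom C a a) \<and>
     (\<forall>f \<in> Arr C. \<forall>g \<in> Arr C. Cod C f = Dom C g \<longrightarrow>
        Comp C g f \<in> hom C (Dom C f) (Cod C g)) \<and>
     (\<forall>f \<in> Arr C. \<forall>g \<in> Arr C. \<forall>h \<in> Arr C. Cod C f = Dom C g \<longrightarrow> Cod C g = Dom C h \<longrightarrow>
        Comp C h (Comp C g f) = Comp C (Comp C h g) f) \<and>
     (\<forall>f \<in> Arr C. Comp C (Id C (Cod C f)) f = f \<and> Comp C f (Id C (Dom C f)) = f)"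

definition strict_monoidal :: "('o, 'm) dsmc \<Rightarrow> bool" where
  "strict_monoidal C \<longleftrightarrow>
     Unit C \<in> Obj C \<and>
     (\<forall>a \<in> Obj C. \<forall>b \<in> Obj C. TenO C a b \<in> Obj C) \<and>
     (\<forall>f \<in> Arr C. \<forall>g \<in> Arr C.
        TenM C f g \<in> hom C (TenO C (Dom C f) (Dom C g)) (TenO C (Cod C f) (Cod C g))) \<and>
     (\<forall>a \<in> Obj C. \<forall>b \<in> Obj C. TenM C (Id C a) (Id C b) = Id C (TenO C a b)) \<and>
     (\<forall>f \<in> Arr C. \<forall>g \<in> Arr C. \<forall>f' \<in> Arr C. \<forall>g' \<in> Arr C.
        Cod C f = Dom C g \<longrightarrow> Cod C f' = Dom C g' \<longrightarrow>
        Comp C (TenM C g g') (TenM C f f') = TenM C (Comp C g f) (Comp C g' f')) \<and>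
     (\<forall>a \<in> Obj C. \<forall>b \<in> Obj C. \<forall>c \<in> Obj C.
        TenO C (TenO C a b) c = TenO C a (TenO C b c)) \<and>
     (\<forall>f \<in> Arr C. \<forall>g \<in> Arr C. \<forall>h \<in> Arr C.
        TenM C (TenM C f g) h = TenM C f (TenM C g h)) \<and>
     (\<forall>a \<in> Obj C. TenO C (Unit C) a = a \<and> TenO C a (Unit C) = a) \<and>
     (\<forall>f \<in> Arr C. TenM C (Id C (Unit C)) f = f \<and> TenM C f (Id C (Unit C)) = f)"

definition symmetric :: "('o, 'm) dsmc \<Rightarrow> bool" where
  "symmetric C \<longleftrightarrow>
     (\<forall>a \<in> Obj C. \<forall>b \<in> Obj C. Sym C a b \<in> hom C (TenO C a b) (TenO C b a)) \<and>
     (\<forall>f \<in> Arr C. \<forall>g \<in> Arr C.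
        Comp C (Sym C (Cod C f) (Cod C g)) (TenM C f g)
        = Comp C (TenM C g f) (Sym C (Dom C f) (Dom C g))) \<and>
     (\<forall>a \<in> Obj C. \<forall>b \<in> Obj C. Comp C (Sym C b a) (Sym C a b) = Id C (TenO C a b)) \<and>
     (\<forall>a \<in> Obj C. \<forall>b \<in> Obj C. \<forall>c \<in> Obj C.
        Sym C a (TenO C b c)
        = Comp C (TenM C (Id C b) (Sym C a c)) (TenM C (Sym C a b) (Id C c))) \<and>
     (\<forall>a \<in> Obj C. Sym C a (Unit C) = Id C a)"

definition dagger :: "('o, 'm) dsmc \<Rightarrow> bool" where
  "dagger C \<longleftrightarrow>
     (\<forall>f \<in> Arr C. Dag C f \<in> hom C (Cod C f) (Dom C f)) \<and>
     (\<forall>a \<in> Obj C. Dag C (Id C a) = Id C a) \<and>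
     (\<forall>f \<in> Arr C. \<forall>g \<in> Arr C. Cod C f = Dom C g \<longrightarrow>
        Dag C (Comp C g f) = Comp C (Dag C f) (Dag C g)) \<and>
     (\<forall>f \<in> Arr C. Dag C (Dag C f) = f) \<and>
     (\<forall>f \<in> Arr C. \<forall>g \<in> Arr C. Dag C (TenM C f g) = TenM C (Dag C f) (Dag C g)) \<and>
     (\<forall>a \<in> Obj C. \<forall>b \<in> Obj C. Dag C (Sym C a b) = Sym C b a)"
     \<comment> \<open>sigma_{a,b}^{-1} = sigma_{b,a} in a symmetric monoidal category\<close>

definition dagger_smc :: "('o, 'm) dsmc \<Rightarrow> bool" where
  "dagger_smc C \<longleftrightarrow> category C \<and> strict_monoidal C \<and> symmetric C \<and> dagger C"

definition unitary :: "('o, 'm) dsmc \<Rightarrow> 'o \<Rightarrow> 'o \<Rightarrow> 'm \<Rightarrow> bool" where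
  "unitary C a b f \<longleftrightarrow> f \<in> hom C a b \<and>
     Comp C (Dag C f) f = Id C a \<and> Comp C f (Dag C f) = Id C b"

definition dagger_frobenius :: "('o, 'm) dsmc \<Rightarrow> 'o \<Rightarrow> 'm \<Rightarrow> 'm \<Rightarrow> bool" where
  "dagger_frobenius C A d g \<longleftrightarrow>
     A \<in> Obj C \<and> d \<in> hom C A (TenO C A A) \<and> g \<in> hom C A (Unit C) \<and>
     Comp C (TenM C d (Id C A)) d = Comp C (TenM C (Id C A) d) d \<and>
     Comp C (TenM C g (Id C A)) d = Id C A \<and>
     Comp C (TenM C (Id C A) g) d = Id C A \<and>
     Comp C (Sym C A A) d = d \<and>
     Comp C (Dag C d) d = Id C A \<and>
     Comp C d (Dag C d) = Comp C (TenM C (Dag C d) (Id C A)) (TenM C (Id C A) d)"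

text \<open>For a self-dual compact structure e : A \<otimes> A \<rightarrow> I, the transpose
f^* = (1 \<otimes> e) \<circ> (1 \<otimes> f \<otimes> 1) \<circ> (e^\<dagger> \<otimes> 1), and f_* = (f^\<dagger>)^*.\<close>

definition upper_star :: "('o, 'm) dsmc \<Rightarrow> 'o \<Rightarrow> 'm \<Rightarrow> 'm \<Rightarrow> 'm" where
  "upper_star C A e f =
     Comp C (TenM C (Id C A) e)
       (Comp C (TenM C (Id C A) (TenM C f (Id C A))) (TenM C (Dag C e) (Id C A)))"

definition lower_star :: "('o, 'm) dsmc \<Rightarrow> 'o \<Rightarrow> 'm \<Rightarrow> 'm \<Rightarrow> 'm" where
  "lower_star C A e f = upper_star C A e (Dag C f)"

end

theory Submission
  imports Defs
begin

(*
  A unitary U transports a dagger-Frobenius structure (d, g) on A to the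
  structure d' = (U \<otimes> U) \<circ> d \<circ> U\<dagger>, g' = g \<circ> U\<dagger>, and the induced cups
  are related by  e' = e \<circ> (U\<dagger> \<otimes> U\<dagger>),  where e = g \<circ> d\<dagger>.

  Bending wires is invertible, so
      e \<circ> (1 \<otimes> V) determines V; since the lower star W of V (the transpose
      of V\<dagger>) satisfies e \<circ> (1 \<otimes> W) = e \<circ> (V\<dagger> \<otimes> 1), a unitary U is its own
      lower star exactly when e is invariant under U\<dagger> \<otimes> U\<dagger>.
  (3) Every dagger-Frobenius structure yields such a cup (locale frobenius).
  (4) Each Frobenius axiom for (d', g') is the conjugate by U of the
      corresponding axiom for (d, g) (locale frobenius_unitary, where U may
      even go to another object B).
*)

locale dsm_category =
  fixes C :: "('o, 'm) dsmc"
  assumes dagger_smc: "dagger_smc C"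
begin

lemma category: "category C" and monoidal: "strict_monoidal C"
  and symmetric: "symmetric C" and dagger: "dagger C"
  using dagger_smc by (simp_all add: dagger_smc_def)

lemma arr_comp[simp]: "f \<in> Arr C \<Longrightarrow> g \<in> Arr C \<Longrightarrow> Cod C f = Dom C g \<Longrightarrow> Comp C g f \<in> Arr C"
  and dom_comp[simp]: "f \<in> Arr C \<Longrightarrow> g \<in> Arr C \<Longrightarrow> Cod C f = Dom C g \<Longrightarrow> Dom C (Comp C g f) = Dom C f"
  and cod_comp[simp]: "f \<in> Arr C \<Longrightarrow> g \<in> Arr C \<Longrightarrow> Cod C f = Dom C g \<Longrightarrow> Cod C (Comp C g f) = Cod C g"
  using category unfolding category_def hom_def by blast+

lemma arr_id[simp]: "a \<in> Obj C \<Longrightarrow> Id C a \<in> Arr C"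
  and dom_id[simp]: "a \<in> Obj C \<Longrightarrow> Dom C (Id C a) = a"
  and cod_id[simp]: "a \<in> Obj C \<Longrightarrow> Cod C (Id C a) = a"
  using category unfolding category_def hom_def by blast+

lemma obj_dom[simp]: "f \<in> Arr C \<Longrightarrow> Dom C f \<in> Obj C"
  and obj_cod[simp]: "f \<in> Arr C \<Longrightarrow> Cod C f \<in> Obj C"
  using category unfolding category_def by blast+

lemma assoc: "f \<in> Arr C \<Longrightarrow> g \<in> Arr C \<Longrightarrow> h \<in> Arr C \<Longrightarrow> Cod C f = Dom C g \<Longrightarrow> Cod C g = Dom C h \<Longrightarrow>
    Comp C h (Comp C g f) = Comp C (Comp C h g) f"
  using category unfolding category_def by blast

lemma comp_id_left[simp]: "f \<in> Arr C \<Longrightarrow> Cod C f = a \<Longrightarrow> Comp C (Id C a) f = f"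
  and comp_id_right[simp]: "f \<in> Arr C \<Longrightarrow> Dom C f = a \<Longrightarrow> Comp C f (Id C a) = f"
  using category unfolding category_def by blast+

lemma obj_unit[simp]: "Unit C \<in> Obj C"
  and obj_tensor[simp]: "a \<in> Obj C \<Longrightarrow> b \<in> Obj C \<Longrightarrow> TenO C a b \<in> Obj C"
  using monoidal unfolding strict_monoidal_def by blast+

lemma arr_tensor[simp]: "f \<in> Arr C \<Longrightarrow> g \<in> Arr C \<Longrightarrow> TenM C f g \<in> Arr C"
  and dom_tensor[simp]: "f \<in> Arr C \<Longrightarrow> g \<in> Arr C \<Longrightarrow> Dom C (TenM C f g) = TenO C (Dom C f) (Dom C g)"
  and cod_tensor[simp]: "f \<in> Arr C \<Longrightarrow> g \<in> Arr C \<Longrightarrow> Cod C (TenM C f g) = TenO C (Cod C f) (Cod C g)"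
  using monoidal unfolding strict_monoidal_def hom_def by blast+

text \<open>Identities on tensor objects are kept split, so that they interact with the
  interchange law.\<close>

lemma id_tensor[simp]: "a \<in> Obj C \<Longrightarrow> b \<in> Obj C \<Longrightarrow> Id C (TenO C a b) = TenM C (Id C a) (Id C b)"
  using monoidal unfolding strict_monoidal_def by metis

lemma comp_id2_left[simp]: "f \<in> Arr C \<Longrightarrow> a \<in> Obj C \<Longrightarrow> b \<in> Obj C \<Longrightarrow> Cod C f = TenO C a b \<Longrightarrow>
    Comp C (TenM C (Id C a) (Id C b)) f = f"
  and comp_id2_right[simp]: "f \<in> Arr C \<Longrightarrow> a \<in> Obj C \<Longrightarrow> b \<in> Obj C \<Longrightarrow> Dom C f = TenO C a b \<Longrightarrow>
    Comp C f (TenM C (Id C a) (Id C b)) = f"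
  using comp_id_left comp_id_right id_tensor by metis+

lemma interchange: "f \<in> Arr C \<Longrightarrow> g \<in> Arr C \<Longrightarrow> f' \<in> Arr C \<Longrightarrow> g' \<in> Arr C \<Longrightarrow>
    Cod C f = Dom C g \<Longrightarrow> Cod C f' = Dom C g' \<Longrightarrow>
    Comp C (TenM C g g') (TenM C f f') = TenM C (Comp C g f) (Comp C g' f')"
  using monoidal unfolding strict_monoidal_def by blast

lemma tensor_obj_assoc[simp]: "a \<in> Obj C \<Longrightarrow> b \<in> Obj C \<Longrightarrow> c \<in> Obj C \<Longrightarrow>
    TenO C (TenO C a b) c = TenO C a (TenO C b c)"
  and tensor_assoc[simp]: "f \<in> Arr C \<Longrightarrow> g \<in> Arr C \<Longrightarrow> h \<in> Arr C \<Longrightarrow>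
    TenM C (TenM C f g) h = TenM C f (TenM C g h)"
  and tensor_obj_unit_left[simp]: "a \<in> Obj C \<Longrightarrow> TenO C (Unit C) a = a"
  and tensor_obj_unit_right[simp]: "a \<in> Obj C \<Longrightarrow> TenO C a (Unit C) = a"
  and tensor_unit_left[simp]: "f \<in> Arr C \<Longrightarrow> TenM C (Id C (Unit C)) f = f"
  and tensor_unit_right[simp]: "f \<in> Arr C \<Longrightarrow> TenM C f (Id C (Unit C)) = f"
  using monoidal unfolding strict_monoidal_def by blast+

lemma arr_sym[simp]: "a \<in> Obj C \<Longrightarrow> b \<in> Obj C \<Longrightarrow> Sym C a b \<in> Arr C"
  and dom_sym[simp]: "a \<in> Obj C \<Longrightarrow> b \<in> Obj C \<Longrightarrow> Dom C (Sym C a b) = TenO C a b"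
  and cod_sym[simp]: "a \<in> Obj C \<Longrightarrow> b \<in> Obj C \<Longrightarrow> Cod C (Sym C a b) = TenO C b a"
  using symmetric unfolding symmetric_def hom_def by blast+

lemma sym_natural: "f \<in> Arr C \<Longrightarrow> g \<in> Arr C \<Longrightarrow>
    Comp C (Sym C (Cod C f) (Cod C g)) (TenM C f g) = Comp C (TenM C g f) (Sym C (Dom C f) (Dom C g))"
  using symmetric unfolding symmetric_def by blast

lemma arr_dag[simp]: "f \<in> Arr C \<Longrightarrow> Dag C f \<in> Arr C"
  and dom_dag[simp]: "f \<in> Arr C \<Longrightarrow> Dom C (Dag C f) = Cod C f"
  and cod_dag[simp]: "f \<in> Arr C \<Longrightarrow> Cod C (Dag C f) = Dom C f"
  and dag_id[simp]: "a \<in> Obj C \<Longrightarrow> Dag C (Id C a) = Id C a"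
  and dag_comp[simp]: "f \<in> Arr C \<Longrightarrow> g \<in> Arr C \<Longrightarrow> Cod C f = Dom C g \<Longrightarrow>
    Dag C (Comp C g f) = Comp C (Dag C f) (Dag C g)"
  and dag_dag[simp]: "f \<in> Arr C \<Longrightarrow> Dag C (Dag C f) = f"
  and dag_tensor[simp]: "f \<in> Arr C \<Longrightarrow> g \<in> Arr C \<Longrightarrow> Dag C (TenM C f g) = TenM C (Dag C f) (Dag C g)"
  and dag_sym[simp]: "a \<in> Obj C \<Longrightarrow> b \<in> Obj C \<Longrightarrow> Dag C (Sym C a b) = Sym C b a"
  using dagger unfolding dagger_def hom_def by blast+

lemma tensor_comp3:
  assumes "f \<in> Arr C" "g \<in> Arr C" "h \<in> Arr C" "f' \<in> Arr C" "g' \<in> Arr C" "h' \<in> Arr C"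
    and "Cod C h = Dom C g" "Cod C g = Dom C f" "Cod C h' = Dom C g'" "Cod C g' = Dom C f'"
  shows "TenM C (Comp C f (Comp C g h)) (Comp C f' (Comp C g' h'))
    = Comp C (TenM C f f') (Comp C (TenM C g g') (TenM C h h'))"
  using assms interchange[of h g h' g'] interchange[of "Comp C g h" f "Comp C g' h'" f'] by simp

lemma comp_cancel_middle:
  assumes "P \<in> Arr C" "y \<in> Arr C" "Q' \<in> Arr C" "Q \<in> Arr C" "z \<in> Arr C" "R \<in> Arr C"
    and "Cod C R = Dom C z" "Cod C z = Dom C Q" "Cod C Q = Dom C Q'" "Cod C Q' = Dom C y"
      "Cod C y = Dom C P"
    and inverse: "Comp C Q' Q = Id C (Dom C Q)"
  shows "Comp C (Comp C P (Comp C y Q')) (Comp C Q (Comp C z R)) = Comp C P (Comp C (Comp C y z) R)"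
proof -
  have cod_Q': "Cod C Q' = Dom C Q"
    using assms cod_comp[of Q Q'] by simp
  have "Comp C (Comp C (Comp C P y) Q') Q = Comp C (Comp C P y) (Comp C Q' Q)"
    using assms by (intro assoc[symmetric]) simp_all
  also have "\<dots> = Comp C P y"
    using assms cod_Q' by (simp del: id_tensor)
  finally have "Comp C (Comp C (Comp C P y) Q') Q = Comp C P y" .
  then show ?thesis
    using assms cod_Q' by (simp add: assoc)
qed

end

section \<open>Symmetric self-dual compact structures\<close>

text \<open>A cup e : A \<otimes> A \<rightarrow> I which is symmetric and satisfies the snake equation
  (e \<otimes> 1) \<circ> (1 \<otimes> e\<dagger>) = 1.  For a symmetric cup this is exactly the compactness
  condition of a self-dual dagger-compact structure.\<close>

locale self_dual_compact = dsm_category +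
  fixes A :: 'o and e :: 'm
  assumes obj_A[simp]: "A \<in> Obj C"
    and cup_hom: "e \<in> hom C (TenO C A A) (Unit C)"
    and snake: "Comp C (TenM C e (Id C A)) (TenM C (Id C A) (Dag C e)) = Id C A"
    and cup_sym: "Comp C e (Sym C A A) = e"
begin

lemma arr_cup[simp]: "e \<in> Arr C" "Dom C e = TenO C A A" "Cod C e = Unit C"
  using cup_hom by (simp_all add: hom_def)

text \<open>Bending the input wire of an endomorphism V into an output and back gives V again;
  hence V is determined by the map e \<circ> (V \<otimes> 1) : A \<otimes> A \<rightarrow> I.\<close>

lemma unbend_bent:
  assumes V: "V \<in> hom C A A"
  shows "V = Comp C (TenM C (Comp C e (TenM C V (Id C A))) (Id C A)) (TenM C (Id C A) (Dag C e))"
proof -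
  have V': "V \<in> Arr C" "Dom C V = A" "Cod C V = A"
    using V by (simp_all add: hom_def)
  have slide_cap: "Comp C (TenM C (Id C A) (Dag C e)) V
      = Comp C (TenM C V (TenM C (Id C A) (Id C A))) (TenM C (Id C A) (Dag C e))"
    using interchange[of V "Id C A" "Id C (Unit C)" "Dag C e"]
      interchange[of "Id C A" V "Dag C e" "Id C (TenO C A A)"] V' by simp
  have merge: "Comp C (TenM C e (Id C A)) (TenM C V (TenM C (Id C A) (Id C A)))
      = TenM C (Comp C e (TenM C V (Id C A))) (Id C A)"
    using interchange[of "TenM C V (Id C A)" e "Id C A" "Id C A"] V' by simp
  have "V = Comp C (Comp C (TenM C e (Id C A)) (TenM C (Id C A) (Dag C e))) V"
    using V' by (simp add: snake)
  also have "\<dots> = Comp C (TenM C e (Id C A)) (Comp C (TenM C (Id C A) (Dag C e)) V)"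
    using V' by (simp add: assoc)
  also have "\<dots> = Comp C (Comp C (TenM C e (Id C A)) (TenM C V (TenM C (Id C A) (Id C A))))
      (TenM C (Id C A) (Dag C e))"
    unfolding slide_cap using V' by (simp add: assoc)
  finally show ?thesis unfolding merge .
qed

lemma bent_unbend:
  assumes h: "h \<in> hom C (TenO C A A) (Unit C)"
  shows "Comp C e (TenM C (Id C A) (Comp C (TenM C (Id C A) h) (TenM C (Dag C e) (Id C A)))) = h"
proof -
  have h': "h \<in> Arr C" "Dom C h = TenO C A A" "Cod C h = Unit C"
    using h by (simp_all add: hom_def)
  let ?I = "Id C A"
  have split: "TenM C ?I (Comp C (TenM C ?I h) (TenM C (Dag C e) ?I))
      = Comp C (TenM C ?I (TenM C ?I h)) (TenM C ?I (TenM C (Dag C e) ?I))"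
    using interchange[of ?I ?I "TenM C (Dag C e) ?I" "TenM C ?I h"] h' by simp
  have parallel: "Comp C e (TenM C ?I (TenM C ?I h)) = Comp C h (TenM C e (TenM C ?I ?I))"
    using interchange[of "TenM C ?I ?I" e h "Id C (Unit C)"]
      interchange[of e "Id C (Unit C)" "TenM C ?I ?I" h] h' by simp
  have yank: "Comp C (TenM C e (TenM C ?I ?I)) (TenM C ?I (TenM C (Dag C e) ?I))
      = TenM C (Comp C (TenM C e ?I) (TenM C ?I (Dag C e))) ?I"
    using interchange[of "TenM C ?I (Dag C e)" "TenM C e ?I" ?I ?I] by simp
  have "Comp C e (TenM C ?I (Comp C (TenM C ?I h) (TenM C (Dag C e) ?I)))
      = Comp C (Comp C e (TenM C ?I (TenM C ?I h))) (TenM C ?I (TenM C (Dag C e) ?I))"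
    unfolding split using h' by (simp add: assoc)
  also have "\<dots> = Comp C h (Comp C (TenM C e (TenM C ?I ?I)) (TenM C ?I (TenM C (Dag C e) ?I)))"
    unfolding parallel using h' by (simp add: assoc)
  also have "\<dots> = h"
    unfolding yank snake using h' by simp
  finally show ?thesis .
qed

text \<open>By symmetry of the cup, an endomorphism may be moved from the first to the second
  wire.\<close>

lemma cup_swap:
  assumes V: "V \<in> hom C A A"
  shows "Comp C e (TenM C V (Id C A)) = Comp C (Comp C e (TenM C (Id C A) V)) (Sym C A A)"
proof -
  have V': "V \<in> Arr C" "Dom C V = A" "Cod C V = A"
    using V by (simp_all add: hom_def)
  have "Comp C (Sym C A A) (TenM C V (Id C A)) = Comp C (TenM C (Id C A) V) (Sym C A A)"
    using sym_natural[of V "Id C A"] V' by simp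
  then have "Comp C (Comp C e (TenM C (Id C A) V)) (Sym C A A)
      = Comp C e (Comp C (Sym C A A) (TenM C V (Id C A)))"
    using V' by (simp add: assoc)
  also have "\<dots> = Comp C (Comp C e (Sym C A A)) (TenM C V (Id C A))"
    using V' by (simp add: assoc)
  finally show ?thesis by (simp add: cup_sym)
qed

lemma cup_cancel:
  assumes V: "V \<in> hom C A A" and W: "W \<in> hom C A A"
    and eq: "Comp C e (TenM C (Id C A) V) = Comp C e (TenM C (Id C A) W)"
  shows "V = W"
  using unbend_bent[OF V] unbend_bent[OF W] cup_swap[OF V] cup_swap[OF W] eq by simp

lemma lower_star_bent:
  assumes V: "V \<in> hom C A A"
  shows "lower_star C A e V
    = Comp C (TenM C (Id C A) (Comp C e (TenM C (Dag C V) (Id C A)))) (TenM C (Dag C e) (Id C A))"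
proof -
  have V': "V \<in> Arr C" "Dom C V = A" "Cod C V = A"
    using V by (simp_all add: hom_def)
  have "TenM C (Id C A) (Comp C e (TenM C (Dag C V) (Id C A)))
      = Comp C (TenM C (Id C A) e) (TenM C (Id C A) (TenM C (Dag C V) (Id C A)))"
    using V' by (simp add: interchange)
  then show ?thesis
    unfolding lower_star_def upper_star_def using V' by (simp add: assoc)
qed

lemma cup_lower_star:
  assumes V: "V \<in> hom C A A"
  shows "Comp C e (TenM C (Id C A) (lower_star C A e V)) = Comp C e (TenM C (Dag C V) (Id C A))"
proof -
  have "Comp C e (TenM C (Dag C V) (Id C A)) \<in> hom C (TenO C A A) (Unit C)"
    using V by (simp add: hom_def)
  then show ?thesis
    unfolding lower_star_bent[OF V] by (rule bent_unbend)
qed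

text \<open>Since e \<circ> (1 \<otimes> -) is injective, V is its own lower star iff V\<dagger> and V act
  alike on the two wires of the cup.\<close>

lemma lower_star_fixed_iff:
  assumes V: "V \<in> hom C A A"
  shows "lower_star C A e V = V \<longleftrightarrow> Comp C e (TenM C (Id C A) V) = Comp C e (TenM C (Dag C V) (Id C A))"
proof
  assume "Comp C e (TenM C (Id C A) V) = Comp C e (TenM C (Dag C V) (Id C A))"
  moreover have "lower_star C A e V \<in> hom C A A"
    using V by (simp add: lower_star_bent hom_def)
  ultimately show "lower_star C A e V = V"
    using cup_cancel cup_lower_star V by metis
qed (use cup_lower_star[OF V] in simp)

text \<open>For a unitary U, the previous condition says that the cup is invariant under
  U\<dagger> \<otimes> U\<dagger>: precomposing with 1 \<otimes> U\<dagger>, respectively 1 \<otimes> U, turns one equation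
  into the other.\<close>

lemma unitary_lower_star_fixed_iff:
  assumes U: "unitary C A A U"
  shows "lower_star C A e U = U \<longleftrightarrow> e = Comp C e (TenM C (Dag C U) (Dag C U))"
proof -
  have U': "U \<in> Arr C" "Dom C U = A" "Cod C U = A"
    and inv: "Comp C (Dag C U) U = Id C A" "Comp C U (Dag C U) = Id C A"
    using U by (simp_all add: unitary_def hom_def)
  have first_wire: "Comp C (Comp C e (TenM C (Dag C U) (Dag C U))) (TenM C (Id C A) U)
      = Comp C e (TenM C (Dag C U) (Id C A))"
    using U' inv by (simp flip: assoc add: interchange)
  have second_wire: "Comp C (Comp C e (TenM C (Id C A) U)) (TenM C (Id C A) (Dag C U)) = e"
    using U' inv by (simp flip: assoc add: interchange)
  have both_wires: "Comp C (Comp C e (TenM C (Dag C U) (Id C A))) (TenM C (Id C A) (Dag C U))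
      = Comp C e (TenM C (Dag C U) (Dag C U))"
    using U' by (simp flip: assoc add: interchange)
  have "Comp C e (TenM C (Id C A) U) = Comp C e (TenM C (Dag C U) (Id C A))
      \<longleftrightarrow> e = Comp C e (TenM C (Dag C U) (Dag C U))"
    using first_wire second_wire both_wires by metis
  then show ?thesis
    using lower_star_fixed_iff U by (simp add: unitary_def)
qed

end

section \<open>The cup of a dagger-Frobenius structure\<close>

locale frobenius = dsm_category +
  fixes A :: 'o and d g :: 'm
  assumes frobenius: "dagger_frobenius C A d g"
begin

lemma obj_A[simp]: "A \<in> Obj C"
  and arr_d[simp]: "d \<in> Arr C" "Dom C d = A" "Cod C d = TenO C A A"
  and arr_g[simp]: "g \<in> Arr C" "Dom C g = A" "Cod C g = Unit C"
  using frobenius unfolding dagger_frobenius_def hom_def by auto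

lemma coassoc: "Comp C (TenM C d (Id C A)) d = Comp C (TenM C (Id C A) d) d"
  and counit_left: "Comp C (TenM C g (Id C A)) d = Id C A"
  and counit_right: "Comp C (TenM C (Id C A) g) d = Id C A"
  and cocomm: "Comp C (Sym C A A) d = d"
  and special: "Comp C (Dag C d) d = Id C A"
  and frobenius_law: "Comp C d (Dag C d) = Comp C (TenM C (Dag C d) (Id C A)) (TenM C (Id C A) d)"
  using frobenius unfolding dagger_frobenius_def by auto

abbreviation cup :: 'm where
  "cup \<equiv> Comp C g (Dag C d)"

lemma induced_cup_sym: "Comp C cup (Sym C A A) = cup"
proof -
  have "Comp C cup (Sym C A A) = Comp C g (Dag C (Comp C (Sym C A A) d))"
    by (simp add: assoc)
  then show ?thesis by (simp add: cocomm)
qed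

text \<open>The snake equation follows from the Frobenius law and the two counit laws.\<close>

lemma induced_cup_snake: "Comp C (TenM C cup (Id C A)) (TenM C (Id C A) (Dag C cup)) = Id C A"
proof -
  let ?I = "Id C A"
  have cup_left: "TenM C cup ?I = Comp C (TenM C g ?I) (TenM C (Dag C d) ?I)"
    by (simp add: interchange)
  have cap_right: "TenM C ?I (Dag C cup) = Comp C (TenM C ?I d) (TenM C ?I (Dag C g))"
    by (simp add: interchange)
  have "Comp C (TenM C cup ?I) (TenM C ?I (Dag C cup))
      = Comp C (Comp C (TenM C g ?I) (Comp C d (Dag C d))) (TenM C ?I (Dag C g))"
    unfolding cup_left cap_right frobenius_law by (simp add: assoc)
  also have "\<dots> = Comp C (Comp C (Comp C (TenM C g ?I) d) (Dag C d)) (TenM C ?I (Dag C g))"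
    by (simp add: assoc)
  also have "\<dots> = Dag C (Comp C (TenM C ?I g) d)"
    by (simp add: counit_left assoc)
  also have "\<dots> = ?I"
    by (simp add: counit_right)
  finally show ?thesis .
qed

sublocale self_dual_compact C A cup
  by unfold_locales (fact obj_A, simp add: hom_def, fact induced_cup_snake, fact induced_cup_sym)

end

section \<open>Transporting a dagger-Frobenius structure along a unitary\<close>

text \<open>Every wire of a Frobenius axiom
  for (d', g') is conjugated by U, and the conjugations cancel pairwise in the middle.\<close>

locale frobenius_unitary = frobenius +
  fixes B U
  assumes unitary: "unitary C A B U"
begin

lemma arr_U[simp]: "U \<in> Arr C" "Dom C U = A" "Cod C U = B"
  and unitary_inverse[simp]: "Comp C (Dag C U) U = Id C A" "Comp C U (Dag C U) = Id C B"
  using unitary by (auto simp: unitary_def hom_def)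

lemma obj_B[simp]: "B \<in> Obj C"
  using obj_cod[OF arr_U(1)] by simp

abbreviation comult' where
  "comult' \<equiv> Comp C (TenM C U U) (Comp C d (Dag C U))"

abbreviation counit' where
  "counit' \<equiv> Comp C g (Dag C U)"

lemma comult'_tensor_id:
  "TenM C comult' (Id C B) = Comp C (TenM C U (TenM C U U)) (Comp C (TenM C d (Id C A)) (TenM C (Dag C U) (Dag C U)))"
  "TenM C (Id C B) comult' = Comp C (TenM C U (TenM C U U)) (Comp C (TenM C (Id C A) d) (TenM C (Dag C U) (Dag C U)))"
  using tensor_comp3[of "TenM C U U" d "Dag C U" U "Id C A" "Dag C U"]
    tensor_comp3[of U "Id C A" "Dag C U" "TenM C U U" d "Dag C U"] by simp_all

lemma counit'_tensor_id:
  "TenM C counit' (Id C B) = Comp C U (Comp C (TenM C g (Id C A)) (TenM C (Dag C U) (Dag C U)))"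
  "TenM C (Id C B) counit' = Comp C U (Comp C (TenM C (Id C A) g) (TenM C (Dag C U) (Dag C U)))"
  using tensor_comp3[of "Id C (Unit C)" g "Dag C U" U "Id C A" "Dag C U"]
    tensor_comp3[of U "Id C A" "Dag C U" "Id C (Unit C)" g "Dag C U"] by simp_all

lemma sym_conj: "Sym C B B = Comp C (TenM C U U) (Comp C (Sym C A A) (TenM C (Dag C U) (Dag C U)))"
proof -
  have "Comp C (Sym C B B) (TenM C U U) = Comp C (TenM C U U) (Sym C A A)"
    using sym_natural[of U U] by simp
  then have "Comp C (Comp C (Sym C B B) (TenM C U U)) (TenM C (Dag C U) (Dag C U))
      = Comp C (TenM C U U) (Comp C (Sym C A A) (TenM C (Dag C U) (Dag C U)))"
    by (simp add: assoc)
  moreover have "Comp C (Comp C (Sym C B B) (TenM C U U)) (TenM C (Dag C U) (Dag C U)) = Sym C B B"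
    by (simp flip: assoc add: interchange)
  ultimately show ?thesis by simp
qed

lemma dag_comult': "Dag C comult' = Comp C U (Comp C (Dag C d) (TenM C (Dag C U) (Dag C U)))"
  by (simp add: assoc)

lemma dag_comult'_tensor_id:
  "TenM C (Dag C comult') (Id C B)
    = Comp C (TenM C U U) (Comp C (TenM C (Dag C d) (Id C A)) (TenM C (Dag C U) (TenM C (Dag C U) (Dag C U))))"
  unfolding dag_comult'
  using tensor_comp3[of U "Dag C d" "TenM C (Dag C U) (Dag C U)" U "Id C A" "Dag C U"] by simp

lemma conj_comp_comult':
  assumes "P \<in> Arr C" "y \<in> Arr C" "Dom C y = TenO C A A" "Cod C y = Dom C P"
  shows "Comp C (Comp C P (Comp C y (TenM C (Dag C U) (Dag C U)))) comult' = Comp C P (Comp C (Comp C y d) (Dag C U))"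
  using assms by (intro comp_cancel_middle) (simp_all add: interchange)

lemma comult'_coassoc: "Comp C (TenM C comult' (Id C B)) comult' = Comp C (TenM C (Id C B) comult') comult'"
  unfolding comult'_tensor_id by (simp add: conj_comp_comult' coassoc)

lemma counit'_left: "Comp C (TenM C counit' (Id C B)) comult' = Id C B"
  unfolding counit'_tensor_id by (simp add: conj_comp_comult' counit_left)

lemma counit'_right: "Comp C (TenM C (Id C B) counit') comult' = Id C B"
  unfolding counit'_tensor_id by (simp add: conj_comp_comult' counit_right)

lemma comult'_cocomm: "Comp C (Sym C B B) comult' = comult'"
  unfolding sym_conj by (simp add: conj_comp_comult' cocomm)

lemma comult'_special: "Comp C (Dag C comult') comult' = Id C B"
  unfolding dag_comult' by (simp add: conj_comp_comult' special)

lemma comult'_frobenius: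
  "Comp C comult' (Dag C comult') = Comp C (TenM C (Dag C comult') (Id C B)) (TenM C (Id C B) comult')"
proof -
  have "Comp C comult' (Dag C comult')
      = Comp C (TenM C U U) (Comp C (Comp C d (Dag C d)) (TenM C (Dag C U) (Dag C U)))"
    unfolding dag_comult' by (intro comp_cancel_middle) simp_all
  also have "\<dots> = Comp C (TenM C U U)
      (Comp C (Comp C (TenM C (Dag C d) (Id C A)) (TenM C (Id C A) d)) (TenM C (Dag C U) (Dag C U)))"
    by (simp add: frobenius_law)
  also have "\<dots> = Comp C (TenM C (Dag C comult') (Id C B)) (TenM C (Id C B) comult')"
    unfolding dag_comult'_tensor_id comult'_tensor_id
    by (intro comp_cancel_middle[symmetric]) (simp_all add: interchange)
  finally show ?thesis .
qed

theorem transported_frobenius: "dagger_frobenius C B comult' counit'"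
  unfolding dagger_frobenius_def hom_def
  using comult'_coassoc counit'_left counit'_right comult'_cocomm comult'_special comult'_frobenius
  by simp

lemma transported_cup: "Comp C counit' (Dag C comult') = Comp C cup (TenM C (Dag C U) (Dag C U))"
proof -
  have "Comp C (Comp C g (Dag C U)) U = Comp C g (Comp C (Dag C U) U)"
    by (rule assoc[symmetric]) simp_all
  then have "Comp C (Comp C g (Dag C U)) U = g"
    by simp
  then show ?thesis
    by (simp add: assoc)
qed

end

theorem mainTheorem1:
  fixes C :: "('o, 'm) dsmc" and A :: 'o and d g U :: 'm
  assumes "dagger_smc C"
    and "dagger_frobenius C A d g"
    and "unitary C A A U"
  shows "dagger_frobenius C A
           (Comp C (TenM C U U) (Comp C d (Dag C U))) (Comp C g (Dag C U))
    \<and> (Comp C g (Dag C d)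
         = Comp C (Comp C g (Dag C U)) (Dag C (Comp C (TenM C U U) (Comp C d (Dag C U))))
       \<longleftrightarrow> lower_star C A (Comp C g (Dag C d)) U = U)"
proof -
  interpret frobenius_unitary C A d g A U
    by unfold_locales (fact assms)+
  show ?thesis
    unfolding transported_cup
    using transported_frobenius unitary_lower_star_fixed_iff[OF unitary] by simp
qed

end
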